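(* Let $n\ge 0$, $m\ge 1$ and $r\ge 1$ be integers. If $m$ is odd then \[ F_m^{\,n}L_mF_{rm}\;\Big|\;F_{m(r+1)}^{\,n+1}-F_{m(r-1)}^{\,n+1}, \] and if $m$ is even then \[ F_m^{\,n}L_mF_{rm}\;\Big|\;F_{m(r+1)}^{\,n+1}+(-1)^nF_{m(r-1)}^{\,n+1}. \]
   Context: $F_n$ and $L_n$ denote the Fibonacci and Lucas numbers, defined by $F_0=0,F_1=1$, $L_0=2,L_1=1$ and $x_n=x_{n-1}+x_{n-2}$. *)

theory Defs
  imports Main "HOL-Number_Theory.Fib"
begin

fun lucas :: "nat \<Rightarrow> nat" where
  "lucas 0 = 2"
| "lucas (Suc 0) = 1"
| "lucas (Suc (Suc n)) = lucas (Suc n) + lucas n"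

end

theory Submission
  imports Defs
begin

text \<open>
  The identity \<open>L(m) F(rm) = F(m(r+1)) + (-1)^m F(m(r-1))\<close> writes the last two factors
  of the divisor as \<open>x - y\<close> with \<open>x = F(m(r+1))\<close> and \<open>y = -(-1)^m F(m(r-1))\<close>, both
  multiples of \<open>F(m)\<close>. In \<open>x^(n+1) - y^(n+1) = (x - y) \<Sum>i\<le>n. x^i y^(n-i)\<close> every
  summand is then divisible by \<open>F(m)^n\<close>.
\<close>

lemma lucas_mult_fib_add:
  "int (lucas m) * int (fib (m + j)) = int (fib (2 * m + j)) + (-1) ^ m * int (fib j)"
proof (induction m arbitrary: j rule: lucas.induct)
  case 1
  then show ?case by simp
next
  case 2
  then show ?case by (simp add: numeral_2_eq_2)
next
  case (3 m)
  have "Suc (Suc m) + j = Suc m + Suc j" "m + Suc (Suc j) = Suc m + Suc j"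
       "2 * Suc (Suc m) + j = Suc (Suc (2 * m + Suc (Suc j)))"
       "2 * Suc m + Suc j = Suc (2 * m + Suc (Suc j))"
    by simp_all
  with "3.IH"[of "Suc j"] "3.IH"(2)[of "Suc (Suc j)"] show ?case
    by (simp add: algebra_simps)
qed

lemma lucas_mult_fib_mult:
  assumes "r \<ge> 1"
  shows "int (lucas m) * int (fib (r * m))
           = int (fib (m * (r + 1))) + (-1) ^ m * int (fib (m * (r - 1)))"
proof -
  have "m + m * (r - 1) = r * m" "2 * m + m * (r - 1) = m * (r + 1)"
    using assms by (cases r; simp add: algebra_simps)+
  then show ?thesis
    using lucas_mult_fib_add[of m "m * (r - 1)"] by (simp only:)
qed

lemma fib_dvd_fib_mult: "fib m dvd fib (m * k)"
  by (metis fib_gcd gcd_dvd2 gcd_nat.absorb_iff1 dvd_triv_left)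

lemma power_diff_power_dvd:
  fixes c x y :: "'a :: comm_ring_1"
  assumes "c dvd x" "c dvd y"
  shows "c ^ n * (x - y) dvd x ^ (n + 1) - y ^ (n + 1)"
proof -
  have "c ^ n dvd (\<Sum>i<n + 1. y ^ (n + 1 - Suc i) * x ^ i)"
  proof (rule dvd_sum)
    fix i assume "i \<in> {..<n + 1}"
    then have "c ^ n = c ^ (n - i) * c ^ i"
      by (simp flip: power_add)
    moreover have "c ^ (n - i) dvd y ^ (n + 1 - Suc i)" "c ^ i dvd x ^ i"
      using assms by (simp_all add: dvd_power_same)
    ultimately show "c ^ n dvd y ^ (n + 1 - Suc i) * x ^ i"
      by (simp add: mult_dvd_mono)
  qed
  then show ?thesis
    unfolding power_diff_sumr2 by (simp add: mult_dvd_mono mult.commute)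
qed

theorem mainTheorem16:
  fixes n m r :: nat
  assumes "m \<ge> 1" and "r \<ge> 1"
  shows "(odd m \<longrightarrow>
            (int (fib m))^n * int (lucas m) * int (fib (r*m)) dvd
              (int (fib (m*(r+1))))^(n+1) - (int (fib (m*(r-1))))^(n+1))
       \<and> (even m \<longrightarrow>
            (int (fib m))^n * int (lucas m) * int (fib (r*m)) dvd
              (int (fib (m*(r+1))))^(n+1) + (-1)^n * (int (fib (m*(r-1))))^(n+1))"
proof -
  define c x y where "c = int (fib m)" and "x = int (fib (m * (r + 1)))"
    and "y = int (fib (m * (r - 1)))"
  have "c dvd x" "c dvd y"
    unfolding c_def x_def y_def by (simp_all only: int_dvd_int_iff fib_dvd_fib_mult)
  have lucas_fib: "int (lucas m) * int (fib (r * m)) = x + (-1) ^ m * y"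
    unfolding x_def y_def using lucas_mult_fib_mult[OF \<open>r \<ge> 1\<close>] .
  show ?thesis
    unfolding c_def [symmetric] x_def [symmetric] y_def [symmetric] mult.assoc lucas_fib
  proof (intro conjI impI)
    assume "odd m"
    then show "c ^ n * (x + (-1) ^ m * y) dvd x ^ (n + 1) - y ^ (n + 1)"
      using power_diff_power_dvd[OF \<open>c dvd x\<close> \<open>c dvd y\<close>] by simp
  next
    assume "even m"
    have "c dvd - y" using \<open>c dvd y\<close> by simp
    from power_diff_power_dvd[OF \<open>c dvd x\<close> this, of n] \<open>even m\<close>
    show "c ^ n * (x + (-1) ^ m * y) dvd x ^ (n + 1) + (-1) ^ n * y ^ (n + 1)"
      by (simp add: power_minus' mult.left_commute)
  qed
qed

end
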